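(* Let $A,B,C$ be finite-dimensional complex vector spaces and let $T\in A\otimes B\otimes C$ be nonzero. Then there exists a hyperplane $H_A\subset A^*$ such that $\underline{\mathbf R}(T|_{H_A\times B^*\times C^*})\le\underline{\mathbf R}(T)-1$. Equivalently, there exists a nonzero $a\in A$ such that the image $T'$ of $T$ under the projection $A\otimes B\otimes C\to (A/\langle a\rangle)\otimes B\otimes C$ satisfies $\underline{\mathbf R}(T')\le\underline{\mathbf R}(T)-1$.
   Context: The border rank $\underline{\mathbf R}(T)$ of a tensor $T$ is the smallest $r$ such that $T$ is a limit of tensors that are sums of $r$ rank one tensors $a\otimes b\otimes c$ (i.e. $[T]\in\sigma_r(Seg(\mathbb PA\times\mathbb PB\times\mathbb PC))$). *)

theory Defs
  imports Complex_Main
begin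

text \<open>Tensors in A \<otimes> B \<otimes> C with dim A = na, dim B = nb, dim C = nc, represented in
  coordinates as functions nat \<Rightarrow> nat \<Rightarrow> nat \<Rightarrow> complex; only the entries with
  i < na, j < nb, k < nc are meaningful.\<close>

type_synonym tensor = "nat \<Rightarrow> nat \<Rightarrow> nat \<Rightarrow> complex"

definition tensor_eq :: "nat \<Rightarrow> nat \<Rightarrow> nat \<Rightarrow> tensor \<Rightarrow> tensor \<Rightarrow> bool" where
  "tensor_eq na nb nc S T \<longleftrightarrow> (\<forall>i<na. \<forall>j<nb. \<forall>k<nc. S i j k = T i j k)"

definition rank_le :: "nat \<Rightarrow> nat \<Rightarrow> nat \<Rightarrow> nat \<Rightarrow> tensor \<Rightarrow> bool" where
  "rank_le na nb nc r T \<longleftrightarrow>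
     (\<exists>(u::nat \<Rightarrow> nat \<Rightarrow> complex) (v::nat \<Rightarrow> nat \<Rightarrow> complex) (w::nat \<Rightarrow> nat \<Rightarrow> complex).
        tensor_eq na nb nc T (\<lambda>i j k. \<Sum>l<r. u l i * v l j * w l k))"

text \<open>T is a limit of tensors that are sums of r rank one tensors (Euclidean topology on
  the finite-dimensional space A \<otimes> B \<otimes> C, i.e. coordinatewise convergence).\<close>
definition border_rank_le :: "nat \<Rightarrow> nat \<Rightarrow> nat \<Rightarrow> nat \<Rightarrow> tensor \<Rightarrow> bool" where
  "border_rank_le na nb nc r T \<longleftrightarrow>
     (\<exists>S :: nat \<Rightarrow> tensor. (\<forall>m. rank_le na nb nc r (S m)) \<and>
        (\<forall>i<na. \<forall>j<nb. \<forall>k<nc. (\<lambda>m. S m i j k) \<longlonglongrightarrow> T i j k))"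

definition border_rank :: "nat \<Rightarrow> nat \<Rightarrow> nat \<Rightarrow> tensor \<Rightarrow> nat" where
  "border_rank na nb nc T = (LEAST r. border_rank_le na nb nc r T)"

definition lin_indep_family :: "nat \<Rightarrow> nat \<Rightarrow> (nat \<Rightarrow> nat \<Rightarrow> complex) \<Rightarrow> bool" where
  "lin_indep_family na n h \<longleftrightarrow>
     (\<forall>c::nat \<Rightarrow> complex. (\<forall>i<na. (\<Sum>p<n. c p * h p i) = 0) \<longrightarrow> (\<forall>p<n. c p = 0))"

text \<open>Restriction of T (viewed as a trilinear form on A* \<times> B* \<times> C*) to H \<times> B* \<times> C*,
  where H \<subseteq> A* has basis h_0, ..., h_{n-1}; the result lives in H* \<otimes> B \<otimes> C,
  written in the dual basis.\<close>
definition restrict_A :: "nat \<Rightarrow> (nat \<Rightarrow> nat \<Rightarrow> complex) \<Rightarrow> tensor \<Rightarrow> tensor" where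
  "restrict_A na h T = (\<lambda>p j k. \<Sum>i<na. h p i * T i j k)"

end

theory Submission
  imports Defs "HOL-Analysis.Analysis"
begin

text \<open>Take a border rank decomposition \<open>S\<^sub>m \<rightarrow> T\<close> with \<open>r\<close> terms, \<open>S\<^sub>m = \<Sum>\<^sub>l a\<^sub>l\<^sub>m \<otimes> b\<^sub>l\<^sub>m \<otimes> c\<^sub>l\<^sub>m\<close>.
  Restricting \<open>S\<^sub>m\<close> to a hyperplane \<open>H\<^sub>m \<subseteq> A*\<close> annihilating \<open>a\<^sub>r\<^sub>m\<close> kills one term, so the
  restriction has rank at most \<open>r - 1\<close>. Normalising \<open>a\<^sub>r\<^sub>m\<close> by a coordinate of maximal modulus
  (the same one along a subsequence) makes the hyperplanes range over a compact set, so a further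
  subsequence converges to a hyperplane \<open>H\<close>; then \<open>T|\<^sub>H\<close> is the limit of the restrictions.\<close>

lemma sum_lessThan_mult:
  fixes g :: "nat \<Rightarrow> 'a::comm_monoid_add"
  shows "(\<Sum>l<a * b. g l) = (\<Sum>i<a. \<Sum>j<b. g (i * b + j))"
proof -
  have "(\<Sum>l<a * b. g l) = (\<Sum>i<a. \<Sum>l\<in>{i * b..<i * b + b}. g l)"
    by (rule sum.nat_group[symmetric])
  also have "\<dots> = (\<Sum>i<a. \<Sum>j<b. g (i * b + j))"
    by (rule sum.cong[OF refl]) (simp add: sum.atLeastLessThan_shift_0 atLeast0LessThan)
  finally show ?thesis .
qed

text \<open>Each slice \<open>e\<^sub>i \<otimes> e\<^sub>j \<otimes> T(i, j, -)\<close> is a rank one tensor.\<close>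
lemma rank_le_slices: "rank_le na nb nc (na * nb) T"
  unfolding rank_le_def tensor_eq_def
proof (intro exI allI impI)
  fix i j k assume i: "i < na" and j: "j < nb"
  let ?u = "\<lambda>l i'. if i' = l div nb then 1 else (0::complex)"
  let ?v = "\<lambda>l j'. if j' = l mod nb then 1 else (0::complex)"
  let ?w = "\<lambda>l k. T (l div nb) (l mod nb) k"
  have "(\<Sum>l<na * nb. ?u l i * ?v l j * ?w l k)
      = (\<Sum>i'<na. \<Sum>j'<nb. ?u (i' * nb + j') i * ?v (i' * nb + j') j * ?w (i' * nb + j') k)"
    by (rule sum_lessThan_mult)
  also have "\<dots> = (\<Sum>i'<na. \<Sum>j'<nb. if i' = i \<and> j' = j then T i j k else 0)"
    by (intro sum.cong refl) auto
  also have "\<dots> = (\<Sum>i'<na. if i' = i then (\<Sum>j'<nb. if j' = j then T i j k else 0) else 0)"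
    by (intro sum.cong refl) auto
  also have "\<dots> = T i j k" using i j by simp
  finally show "T i j k = (\<Sum>l<na * nb. ?u l i * ?v l j * ?w l k)" by simp
qed

lemma border_rank_le_border_rank: "border_rank_le na nb nc (border_rank na nb nc T) T"
proof -
  have "border_rank_le na nb nc (na * nb) T"
    unfolding border_rank_le_def using rank_le_slices by (intro exI[of _ "\<lambda>m. T"]) auto
  then show ?thesis unfolding border_rank_def by (rule LeastI)
qed

lemma border_rank_le_0_imp_zero:
  assumes "border_rank_le na nb nc 0 T" "i < na" "j < nb" "k < nc"
  shows "T i j k = 0"
proof -
  obtain S where "\<forall>m. rank_le na nb nc 0 (S m)" and S: "(\<lambda>m. S m i j k) \<longlonglongrightarrow> T i j k"
    using assms unfolding border_rank_le_def by blast
  then have "S m i j k = 0" for m using assms(2-4) by (auto simp: rank_le_def tensor_eq_def)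
  with S show ?thesis by (simp add: LIMSEQ_const_iff)
qed

lemma rank_le_seq_decomposition:
  assumes "\<forall>m. rank_le na nb nc r (S m)"
  shows "\<exists>u v w. \<forall>m. tensor_eq na nb nc (S m) (\<lambda>i j k. \<Sum>l<r. u m l i * v m l j * w m l k)"
proof -
  obtain u where "\<forall>m. \<exists>v w. tensor_eq na nb nc (S m) (\<lambda>i j k. \<Sum>l<r. u m l i * v l j * w l k)"
    using assms unfolding rank_le_def by (rule choice[THEN exE]) blast
  then obtain v where "\<forall>m. \<exists>w. tensor_eq na nb nc (S m) (\<lambda>i j k. \<Sum>l<r. u m l i * v m l j * w l k)"
    by (rule choice[THEN exE]) blast
  then show ?thesis by (rule choice[THEN exE]) blast
qed

lemma rank_le_restrict_A_annihilating:
  assumes "tensor_eq na nb nc S (\<lambda>i j k. \<Sum>l<Suc r. u l i * v l j * w l k)"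
    and "\<forall>p<n. (\<Sum>i<na. h p i * u r i) = 0"
  shows "rank_le n nb nc r (restrict_A na h S)"
  unfolding rank_le_def tensor_eq_def
proof (intro exI allI impI)
  fix p j k assume p: "p < n" and j: "j < nb" and k: "k < nc"
  have "restrict_A na h S p j k = (\<Sum>i<na. h p i * (\<Sum>l<Suc r. u l i * v l j * w l k))"
    unfolding restrict_A_def using assms(1) j k by (intro sum.cong refl) (auto simp: tensor_eq_def)
  also have "\<dots> = (\<Sum>l<Suc r. (\<Sum>i<na. h p i * u l i) * v l j * w l k)"
    by (simp add: sum_distrib_left sum_distrib_right sum.swap[of _ "{..<na}"] mult_ac
        del: sum.lessThan_Suc)
  also have "\<dots> = (\<Sum>l<r. (\<Sum>i<na. h p i * u l i) * v l j * w l k)"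
    using assms(2) p by simp
  finally show "restrict_A na h S p j k = (\<Sum>l<r. (\<lambda>l p. \<Sum>i<na. h p i * u l i) l p * v l j * w l k)"
    by simp
qed

lemma restrict_A_tendsto:
  assumes "\<forall>i<na. (\<lambda>m. S m i j k) \<longlonglongrightarrow> T i j k"
    and "\<forall>i<na. (\<lambda>m. h m p i) \<longlonglongrightarrow> h' p i"
  shows "(\<lambda>m. restrict_A na (h m) (S m) p j k) \<longlonglongrightarrow> restrict_A na h' T p j k"
  unfolding restrict_A_def using assms by (intro tendsto_sum tendsto_mult) auto

lemma border_rank_le_restrict_A_limit:
  assumes "\<And>m. rank_le n nb nc r (restrict_A na (h m) (S m))"
    and "\<forall>i<na. \<forall>j<nb. \<forall>k<nc. (\<lambda>m. S m i j k) \<longlonglongrightarrow> T i j k"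
    and "\<forall>p<n. \<forall>i<na. (\<lambda>m. h m p i) \<longlonglongrightarrow> h' p i"
  shows "border_rank_le n nb nc r (restrict_A na h' T)"
  unfolding border_rank_le_def using assms
  by (intro exI[of _ "\<lambda>m. restrict_A na (h m) (S m)"]) (blast intro: restrict_A_tendsto)

definition skip :: "nat \<Rightarrow> nat \<Rightarrow> nat" where
  "skip i0 p = (if p < i0 then p else Suc p)"

lemma skip_neq: "skip i0 p \<noteq> i0"
  and skip_less: "i0 < na \<Longrightarrow> p < na - 1 \<Longrightarrow> skip i0 p < na"
  and skip_eq_iff: "skip i0 p = skip i0 q \<longleftrightarrow> p = q"
  by (auto simp: skip_def)

text \<open>The functionals \<open>e\<^sup>*\<^bsub>skip i\<^sub>0 p\<^esub> - c\<^sub>p e\<^sup>*\<^bsub>i\<^sub>0\<^esub>\<close>; for \<open>p < na - 1\<close> they form a basis of the hyperplane of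
  \<open>A*\<close> annihilating \<open>e\<^sub>i\<^sub>0 + \<Sum>\<^sub>p c\<^sub>p e\<^bsub>skip i\<^sub>0 p\<^esub>\<close>.\<close>
definition hyperplane_basis :: "nat \<Rightarrow> (nat \<Rightarrow> complex) \<Rightarrow> nat \<Rightarrow> nat \<Rightarrow> complex" where
  "hyperplane_basis i0 c p i = (if i = skip i0 p then 1 else 0) - (if i = i0 then c p else 0)"

lemma lin_indep_hyperplane_basis:
  assumes "i0 < na"
  shows "lin_indep_family na (na - 1) (hyperplane_basis i0 c)"
  unfolding lin_indep_family_def
proof (intro allI impI)
  fix d :: "nat \<Rightarrow> complex" and q
  assume zero: "\<forall>i<na. (\<Sum>p<na - 1. d p * hyperplane_basis i0 c p i) = 0" and q: "q < na - 1"
  have "(\<Sum>p<na - 1. d p * hyperplane_basis i0 c p (skip i0 q)) = 0"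
    using zero skip_less[OF assms q] by blast
  then have "(\<Sum>p<na - 1. d p * (if p = q then 1 else 0)) = 0"
    by (simp add: hyperplane_basis_def skip_neq skip_eq_iff eq_commute[of q])
  then have "(\<Sum>p<na - 1. if p = q then d p else 0) = 0"
    by (simp add: if_distrib cong: if_cong)
  then show "d q = 0" using q by (simp add: sum.delta)
qed

lemma hyperplane_basis_apply:
  assumes "i0 < na" "p < na - 1"
  shows "(\<Sum>i<na. hyperplane_basis i0 c p i * a i) = a (skip i0 p) - c p * a i0"
proof -
  have "(\<Sum>i<na. hyperplane_basis i0 c p i * a i)
      = (\<Sum>i<na. if i = skip i0 p then a i else 0) - (\<Sum>i<na. if i = i0 then c p * a i else 0)"
    unfolding sum_subtractf[symmetric]
    by (intro sum.cong refl) (auto simp: hyperplane_basis_def skip_neq left_diff_distrib)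
  then show ?thesis using assms skip_less by simp
qed

lemma hyperplane_basis_tendsto:
  assumes "(\<lambda>m. c m p) \<longlonglongrightarrow> c' p"
  shows "(\<lambda>m. hyperplane_basis i0 (c m) p i) \<longlonglongrightarrow> hyperplane_basis i0 c' p i"
  unfolding hyperplane_basis_def using assms by (intro tendsto_diff) auto

lemma bounded_coords_convergent_subseq:
  fixes x :: "nat \<Rightarrow> nat \<Rightarrow> complex"
  assumes "\<And>m i. norm (x m i) \<le> B"
  shows "\<exists>\<sigma> L. strict_mono \<sigma> \<and> (\<forall>i<n. (\<lambda>m. x (\<sigma> m) i) \<longlonglongrightarrow> L i)"
proof (induction n)
  case 0
  show ?case by (intro exI[of _ id] exI) (auto simp: strict_mono_def)
next
  case (Suc n)
  then obtain \<sigma> L where \<sigma>: "strict_mono \<sigma>" and L: "\<forall>i<n. (\<lambda>m. x (\<sigma> m) i) \<longlonglongrightarrow> L i"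
    by blast
  have "bounded (range (\<lambda>m. x (\<sigma> m) n))"
    using assms by (auto simp: bounded_iff)
  then obtain l \<tau> where \<tau>: "strict_mono \<tau>" and l: "((\<lambda>m. x (\<sigma> m) n) \<circ> \<tau>) \<longlonglongrightarrow> l"
    using bounded_imp_convergent_subsequence by blast
  have "(\<lambda>m. x (\<sigma> (\<tau> m)) i) \<longlonglongrightarrow> (L(n := l)) i" if "i < Suc n" for i
  proof (cases "i = n")
    case False
    then have "((\<lambda>m. x (\<sigma> m) i) \<circ> \<tau>) \<longlonglongrightarrow> L i"
      using that L \<tau> LIMSEQ_subseq_LIMSEQ less_Suc_eq by blast
    then show ?thesis using False by (simp add: o_def)
  qed (use l in \<open>simp add: o_def\<close>)
  moreover have "strict_mono (\<sigma> \<circ> \<tau>)" using \<sigma> \<tau> strict_mono_o by blast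
  ultimately show ?case by (intro exI[of _ "\<sigma> \<circ> \<tau>"] exI[of _ "L(n := l)"]) (simp add: comp_def)
qed

lemma subseq_common_max_coord:
  fixes a :: "nat \<Rightarrow> nat \<Rightarrow> complex"
  assumes "0 < na"
  shows "\<exists>i0 (\<rho> :: nat \<Rightarrow> nat). i0 < na \<and> strict_mono \<rho> \<and> (\<forall>m. \<forall>i<na. norm (a (\<rho> m) i) \<le> norm (a (\<rho> m) i0))"
proof -
  have "\<forall>m. \<exists>p. p < na \<and> (\<forall>i<na. norm (a m i) \<le> norm (a m p))"
  proof
    fix m
    have "Max ((\<lambda>i. norm (a m i)) ` {..<na}) \<in> (\<lambda>i. norm (a m i)) ` {..<na}"
      using assms by (intro Max_in) auto
    then obtain p where "p < na" "norm (a m p) = Max ((\<lambda>i. norm (a m i)) ` {..<na})"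
      by auto
    then show "\<exists>p. p < na \<and> (\<forall>i<na. norm (a m i) \<le> norm (a m p))" by (intro exI[of _ p]) auto
  qed
  from choice[OF this] obtain piv
    where piv: "\<forall>m. piv m < na \<and> (\<forall>i<na. norm (a m i) \<le> norm (a m (piv m)))"
    by blast
  have "finite (range piv)" using piv by (auto intro: finite_subset[of _ "{..<na}"])
  then obtain m0 where "infinite {m. piv m = piv m0}"
    using pigeonhole_infinite[of UNIV piv] by auto
  then obtain \<rho> :: "nat \<Rightarrow> nat" where \<rho>: "strict_mono \<rho>" "\<forall>m. piv (\<rho> m) = piv m0"
    using infinite_enumerate by blast
  show ?thesis
  proof (intro exI conjI)
    show "piv m0 < na" using piv by blast
    show "strict_mono \<rho>" by (fact \<rho>(1))
    show "\<forall>m. \<forall>i<na. norm (a (\<rho> m) i) \<le> norm (a (\<rho> m) (piv m0))"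
      using piv \<rho>(2) by metis
  qed
qed

text \<open>Dividing by a coordinate of maximal modulus keeps the coefficients \<open>c m\<close> bounded; when that
  coordinate vanishes, so does \<open>a\<^sub>\<tau>\<^sub>m\<close>, and any hyperplane annihilates it.\<close>
lemma annihilating_hyperplanes_convergent_subseq:
  fixes a :: "nat \<Rightarrow> nat \<Rightarrow> complex"
  assumes "0 < na"
  shows "\<exists>i0 c c' (\<tau> :: nat \<Rightarrow> nat). i0 < na \<and> strict_mono \<tau> \<and> (\<forall>p<na - 1. (\<lambda>m. c m p) \<longlonglongrightarrow> c' p) \<and>
           (\<forall>m. \<forall>p<na - 1. (\<Sum>i<na. hyperplane_basis i0 (c m) p i * a (\<tau> m) i) = 0)"
proof -
  obtain i0 and \<rho> :: "nat \<Rightarrow> nat" where i0: "i0 < na" and \<rho>: "strict_mono \<rho>"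
    and max: "\<And>m i. i < na \<Longrightarrow> norm (a (\<rho> m) i) \<le> norm (a (\<rho> m) i0)"
    using subseq_common_max_coord[OF assms] by blast
  define x where "x m p = (if p < na - 1 then a (\<rho> m) (skip i0 p) / a (\<rho> m) i0 else 0)" for m p
  have "norm (x m p) \<le> 1" for m p
  proof (cases "p < na - 1")
    case True
    then show ?thesis using max[OF skip_less[OF i0 True], of m]
      by (cases "a (\<rho> m) i0 = 0") (auto simp: x_def norm_divide divide_le_eq_1)
  qed (simp add: x_def)
  then obtain \<sigma> c' where \<sigma>: "strict_mono \<sigma>" and c': "\<forall>p<na - 1. (\<lambda>m. x (\<sigma> m) p) \<longlonglongrightarrow> c' p"
    using bounded_coords_convergent_subseq by blast
  have "(\<Sum>i<na. hyperplane_basis i0 (x (\<sigma> m)) p i * a (\<rho> (\<sigma> m)) i) = 0" if "p < na - 1" for m p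
  proof -
    have "a (\<rho> (\<sigma> m)) i0 = 0 \<Longrightarrow> a (\<rho> (\<sigma> m)) (skip i0 p) = 0"
      using max[OF skip_less[OF i0 that], of "\<sigma> m"] by simp
    then show ?thesis using that by (simp add: hyperplane_basis_apply[OF i0 that] x_def)
  qed
  then have "\<forall>m. \<forall>p<na - 1. (\<Sum>i<na. hyperplane_basis i0 (x (\<sigma> m)) p i * a ((\<rho> \<circ> \<sigma>) m) i) = 0"
    by simp
  with i0 c' strict_mono_o[OF \<rho> \<sigma>] show ?thesis
    by (intro exI[of _ i0] exI[of _ "\<lambda>m. x (\<sigma> m)"] exI[of _ c'] exI[of _ "\<rho> \<circ> \<sigma>"]) blast
qed

theorem lemma5p2:
  fixes na nb nc :: nat and T :: tensor
  assumes "\<exists>i<na. \<exists>j<nb. \<exists>k<nc. T i j k \<noteq> 0"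
  shows "\<exists>h :: nat \<Rightarrow> nat \<Rightarrow> complex.
           lin_indep_family na (na - 1) h \<and>
           border_rank (na - 1) nb nc (restrict_A na h T) + 1 \<le> border_rank na nb nc T"
proof -
  obtain r where r: "border_rank na nb nc T = Suc r"
    using assms border_rank_le_0_imp_zero border_rank_le_border_rank not0_implies_Suc by metis
  then obtain S where "\<forall>m. rank_le na nb nc (Suc r) (S m)"
    and S: "\<forall>i<na. \<forall>j<nb. \<forall>k<nc. (\<lambda>m. S m i j k) \<longlonglongrightarrow> T i j k"
    using border_rank_le_border_rank[of na nb nc T] unfolding border_rank_le_def by auto
  then obtain u v w where
    uvw: "\<And>m. tensor_eq na nb nc (S m) (\<lambda>i j k. \<Sum>l<Suc r. u m l i * v m l j * w m l k)"
    using rank_le_seq_decomposition by blast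
  obtain i0 c c' \<tau> where i0: "i0 < na" and \<tau>: "strict_mono \<tau>"
    and c: "\<forall>p<na - 1. (\<lambda>m. c m p) \<longlonglongrightarrow> c' p"
    and ann: "\<forall>m. \<forall>p<na - 1. (\<Sum>i<na. hyperplane_basis i0 (c m) p i * u (\<tau> m) r i) = 0"
    using annihilating_hyperplanes_convergent_subseq[of na "\<lambda>m. u m r"] assms by auto
  have "rank_le (na - 1) nb nc r (restrict_A na (hyperplane_basis i0 (c m)) (S (\<tau> m)))" for m
    using rank_le_restrict_A_annihilating[OF uvw] ann by blast
  moreover have "\<forall>i<na. \<forall>j<nb. \<forall>k<nc. (\<lambda>m. S (\<tau> m) i j k) \<longlonglongrightarrow> T i j k"
    using S LIMSEQ_subseq_LIMSEQ[OF _ \<tau>] by (simp add: o_def) blast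
  moreover have "\<forall>p<na - 1. \<forall>i<na. (\<lambda>m. hyperplane_basis i0 (c m) p i) \<longlonglongrightarrow> hyperplane_basis i0 c' p i"
    using c hyperplane_basis_tendsto by blast
  ultimately have "border_rank_le (na - 1) nb nc r (restrict_A na (hyperplane_basis i0 c') T)"
    by (rule border_rank_le_restrict_A_limit)
  then have "border_rank (na - 1) nb nc (restrict_A na (hyperplane_basis i0 c') T) \<le> r"
    unfolding border_rank_def by (rule Least_le)
  then show ?thesis using lin_indep_hyperplane_basis[OF i0] r by (intro exI) auto
qed

end
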